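(* Let $G$ be a directed graph in which every vertex is reachable from a vertex $s$, let $t$ be a vertex of $G$, and let $k\ge 1$ be an integer. Assume that for no $\ell\in\{k,k+1,\dots,2k-1\}$ does $G$ contain an $(s,t)$-path of length exactly $dist_G(s,t)+\ell$, and assume that $G$ contains an $(s,t)$-path of length at least $dist_G(s,t)+k$. Let $P$ be such a path of minimum length. For $i\ge 0$ let $L_i$ be the set of vertices at distance exactly $i$ from $s$ in $G$. Let $p$ be the smallest integer $i\ge 1$ such that $L_i$ contains more than one vertex of $P$, and let $u$ and $v$ be, respectively, the first and second vertices of $P$ (in the order along $P$) lying in $L_p$. Then the subpath $P_{u,v}$ of $P$ from $u$ to $v$ has length larger than $k$.
   Context: Paths are simple directed paths; the length of a path is its number of edges. $dist_G(a,b)$ denotes the length of a shortest directed $(a,b)$-path in $G$. For a path $P$ and vertices $a,b$ on it (with $a$ before $b$), $P_{a,b}$ denotes the subpath of $P$ from $a$ to $b$. *)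

theory Defs
  imports Main
begin

definition is_dpath :: "'a set \<Rightarrow> ('a \<times> 'a) set \<Rightarrow> 'a list \<Rightarrow> 'a \<Rightarrow> 'a \<Rightarrow> bool" where
  "is_dpath V E xs a b \<longleftrightarrow> xs \<noteq> [] \<and> hd xs = a \<and> last xs = b \<and> distinct xs \<and>
     set xs \<subseteq> V \<and> (\<forall>i. Suc i < length xs \<longrightarrow> (xs ! i, xs ! Suc i) \<in> E)"

definition plen :: "'a list \<Rightarrow> nat" where
  "plen xs = length xs - 1"

definition gdist :: "'a set \<Rightarrow> ('a \<times> 'a) set \<Rightarrow> 'a \<Rightarrow> 'a \<Rightarrow> nat" where
  "gdist V E a b = (LEAST n. \<exists>xs. is_dpath V E xs a b \<and> plen xs = n)"

definition subpath :: "'a list \<Rightarrow> nat \<Rightarrow> nat \<Rightarrow> 'a list" where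
  "subpath P i j = drop i (take (Suc j) P)"

definition layer :: "'a set \<Rightarrow> ('a \<times> 'a) set \<Rightarrow> 'a \<Rightarrow> nat \<Rightarrow> 'a set" where
  "layer V E s i = {x \<in> V. gdist V E s x = i}"

definition first_rep_layer :: "'a set \<Rightarrow> ('a \<times> 'a) set \<Rightarrow> 'a \<Rightarrow> 'a list \<Rightarrow> nat" where
  "first_rep_layer V E s P = (LEAST i. i \<ge> 1 \<and> card (set P \<inter> layer V E s i) > 1)"

definition layer_positions :: "'a set \<Rightarrow> ('a \<times> 'a) set \<Rightarrow> 'a \<Rightarrow> 'a list \<Rightarrow> nat \<Rightarrow> nat list" where
  "layer_positions V E s P i = filter (\<lambda>j. P ! j \<in> layer V E s i) [0..<length P]"

end

theory Submission
  imports Defs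
begin

text \<open>Let m be the length of P and d = dist(s, t). Since the lengths d + k, ..., d + 2k - 1 are
  forbidden, m \<ge> d + 2k. The distance from s grows by at most one per step along P, so up to
  the first position where it falls behind, P is a shortest path; the vertex there lies in a layer
  already visited, hence p is below that position and u is the p-th vertex of P. Every layer below
  p meets P in a single vertex, which comes before u. So if v were the b-th vertex with b - p \<le> k,
  replacing the part of P up to v by a shortest (s, v)-path, which uses only lower layers apart
  from v, would give an (s, t)-path of length m - (b - p) \<ge> d + k, shorter than P.\<close>

lemma is_dpath_iff:
  "is_dpath V E xs a b \<longleftrightarrow> xs \<noteq> [] \<and> hd xs = a \<and> last xs = b \<and> distinct xs \<and>
     set xs \<subseteq> V \<and> successively (\<lambda>x y. (x, y) \<in> E) xs"
  by (simp add: is_dpath_def successively_conv_nth)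

lemma is_dpath_take:
  assumes "is_dpath V E xs a b" "i < length xs"
  shows "is_dpath V E (take (Suc i) xs) a (xs ! i)"
proof -
  have "last (take (Suc i) xs) = xs ! i"
    using assms(2) by (simp add: take_Suc_conv_app_nth)
  then show ?thesis
    using assms unfolding is_dpath_def by (auto simp: hd_take dest: in_set_takeD)
qed

lemma is_dpath_drop:
  assumes "is_dpath V E xs a b" "i < length xs"
  shows "is_dpath V E (drop i xs) (xs ! i) b"
  using assms unfolding is_dpath_def
  by (auto simp: hd_drop_conv_nth dest: in_set_dropD)

lemma is_dpath_append_tl:
  assumes "is_dpath V E R a v" and "is_dpath V E Q v b" and "set R \<inter> set (tl Q) = {}"
  shows "is_dpath V E (R @ tl Q) a b"
proof -
  obtain Q' where Q: "Q = v # Q'"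
    using assms(2) by (cases Q) (auto simp: is_dpath_iff)
  show ?thesis
    using assms unfolding Q is_dpath_iff
    by (auto simp: successively_append_iff successively_Cons)
qed

lemma plen_append_tl: "R \<noteq> [] \<Longrightarrow> Q \<noteq> [] \<Longrightarrow> plen (R @ tl Q) = plen R + plen Q"
  by (cases R; cases Q) (simp_all add: plen_def)

lemma plen_subpath: "i \<le> j \<Longrightarrow> j < length P \<Longrightarrow> plen (subpath P i j) = j - i"
  by (simp add: subpath_def plen_def)

lemma gdist_le_plen: "is_dpath V E xs a b \<Longrightarrow> gdist V E a b \<le> plen xs"
  unfolding gdist_def by (rule Least_le) blast

lemma shortest_dpath_exists:
  assumes "is_dpath V E xs a b"
  obtains ys where "is_dpath V E ys a b" "plen ys = gdist V E a b"
  using LeastI_ex[of "\<lambda>n. \<exists>xs. is_dpath V E xs a b \<and> plen xs = n"] assms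
  unfolding gdist_def by blast

lemma gdist_eq_0_imp_eq:
  assumes "is_dpath V E xs a b" "gdist V E a b = 0"
  shows "b = a"
proof -
  obtain ys where "is_dpath V E ys a b" "plen ys = 0"
    using shortest_dpath_exists[OF assms(1)] assms(2) by metis
  then show ?thesis
    by (cases ys) (auto simp: is_dpath_def plen_def)
qed

lemma gdist_less_plen_if_not_last:
  assumes "is_dpath V E R a v" "x \<in> set R" "x \<noteq> v"
  shows "gdist V E a x < plen R"
proof -
  obtain i where i: "i < length R" "x = R ! i"
    using assms(2) by (auto simp: in_set_conv_nth)
  have "i \<noteq> length R - 1"
    using assms i by (auto simp: is_dpath_def last_conv_nth)
  moreover have "gdist V E a x \<le> i"
    using gdist_le_plen[OF is_dpath_take[OF assms(1) i(1)]] i by (simp add: plen_def)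
  ultimately show ?thesis
    using i(1) unfolding plen_def by linarith
qed

locale dpath_from =
  fixes V :: "'a set" and E :: "('a \<times> 'a) set" and s t :: 'a and P :: "'a list"
  assumes path: "is_dpath V E P s t"
begin

abbreviation level :: "nat \<Rightarrow> nat" where
  "level i \<equiv> gdist V E s (P ! i)"

lemma level_le: "i < length P \<Longrightarrow> level i \<le> i"
  using gdist_le_plen[OF is_dpath_take[OF path]] by (simp add: plen_def)

lemma level_eq_0_imp: "i < length P \<Longrightarrow> level i = 0 \<Longrightarrow> i = 0"
  using gdist_eq_0_imp_eq[OF is_dpath_take[OF path]] path
  by (auto simp: is_dpath_def hd_conv_nth nth_eq_iff_index_eq)

lemma nth_in_layer_iff: "i < length P \<Longrightarrow> P ! i \<in> layer V E s l \<longleftrightarrow> level i = l"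
  using path by (auto simp: layer_def is_dpath_def)

lemma card_layer_gt_1:
  assumes "a < length P" "b < length P" "a \<noteq> b" "level a = l" "level b = l"
  shows "1 < card (set P \<inter> layer V E s l)"
proof -
  have "P ! a \<noteq> P ! b"
    using path assms(1-3) by (simp add: is_dpath_def nth_eq_iff_index_eq)
  moreover have "{P ! a, P ! b} \<subseteq> set P \<inter> layer V E s l"
    using assms by (simp add: nth_in_layer_iff)
  ultimately show ?thesis
    using card_mono[of "set P \<inter> layer V E s l" "{P ! a, P ! b}"] by simp
qed

text \<open>A shortest path to the b-th vertex meets the rest of P only in its endpoint, since all
  its other vertices lie in lower layers.\<close>
lemma reroute_through_shortest_path:
  assumes b: "b < length P"
    and above: "\<And>c. b < c \<Longrightarrow> c < length P \<Longrightarrow> level b \<le> level c"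
  obtains Q where "is_dpath V E Q s t" "plen Q = level b + (plen P - b)"
proof -
  obtain R where R: "is_dpath V E R s (P ! b)" "plen R = level b"
    using shortest_dpath_exists[OF is_dpath_take[OF path b]] by metis
  have tail: "is_dpath V E (drop b P) (P ! b) t"
    using is_dpath_drop[OF path b] .
  have "set R \<inter> set (tl (drop b P)) = {}"
  proof (rule ccontr)
    assume "set R \<inter> set (tl (drop b P)) \<noteq> {}"
    then obtain y where y: "y \<in> set R" "y \<in> set (drop (Suc b) P)"
      by (auto simp: tl_drop drop_Suc[symmetric])
    then obtain i where "i < length (drop (Suc b) P)" "drop (Suc b) P ! i = y"
      by (auto simp: in_set_conv_nth)
    then have c: "b < Suc b + i" "Suc b + i < length P" "P ! (Suc b + i) \<in> set R"
      using y(1) by auto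
    have "P ! (Suc b + i) \<noteq> P ! b"
      using path c b by (simp add: is_dpath_def nth_eq_iff_index_eq)
    then have "level (Suc b + i) < level b"
      using gdist_less_plen_if_not_last[OF R(1) c(3)] R(2) by simp
    with above c(1,2) show False by fastforce
  qed
  then have "is_dpath V E (R @ tl (drop b P)) s t"
    using is_dpath_append_tl[OF R(1) tail] by simp
  moreover have "plen (R @ tl (drop b P)) = level b + (plen P - b)"
    using plen_append_tl[of R "drop b P"] R tail b by (auto simp: is_dpath_def plen_def)
  ultimately show ?thesis using that by blast
qed

abbreviation rep_layer :: nat where
  "rep_layer \<equiv> first_rep_layer V E s P"

lemma rep_layer_le:
  assumes "a < length P" "b < length P" "a \<noteq> b" "level a = l" "level b = l" "1 \<le> l"
  shows "rep_layer \<le> l" and "1 \<le> rep_layer" and "1 < card (set P \<inter> layer V E s rep_layer)"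
proof -
  have l: "1 \<le> l \<and> 1 < card (set P \<inter> layer V E s l)"
    using assms card_layer_gt_1 by blast
  then show "rep_layer \<le> l"
    unfolding first_rep_layer_def by (rule Least_le)
  have "1 \<le> rep_layer \<and> 1 < card (set P \<inter> layer V E s rep_layer)"
    unfolding first_rep_layer_def using l by (rule LeastI)
  then show "1 \<le> rep_layer" "1 < card (set P \<inter> layer V E s rep_layer)"
    by auto
qed

end

locale dpath_from_with_shortcut = dpath_from +
  assumes shortcut: "\<exists>c < length P. gdist V E s (P ! c) < c"
begin

text \<open>Up to the first shortcut, P runs through the layers one by one; the first shortcut
  lands in a layer already visited, which therefore contains two vertices of P.\<close>
lemma rep_layer_in_geodesic_prefix:
  shows "1 \<le> rep_layer" and "1 < card (set P \<inter> layer V E s rep_layer)"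
    and "rep_layer < length P" and "\<And>i. i \<le> rep_layer \<Longrightarrow> level i = i"
proof -
  define j where "j = (LEAST j. j < length P \<and> level j < j)"
  have j: "j < length P" "level j < j"
    using LeastI_ex[OF shortcut] unfolding j_def by blast+
  have prefix: "level i = i" if "i < j" for i
    using not_less_Least[OF that[unfolded j_def]] level_le[of i] that j(1) by auto
  have "level j \<noteq> 0"
    using level_eq_0_imp[OF j(1)] j(2) by auto
  then have "rep_layer \<le> level j" "1 \<le> rep_layer" "1 < card (set P \<inter> layer V E s rep_layer)"
    using rep_layer_le[of "level j" j "level j"] j prefix by auto
  with j prefix show "1 \<le> rep_layer" "1 < card (set P \<inter> layer V E s rep_layer)"
    "rep_layer < length P" "\<And>i. i \<le> rep_layer \<Longrightarrow> level i = i"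
    by auto
qed

lemma less_rep_layer_if_level_less:
  assumes c: "c < length P" and "level c < rep_layer"
  shows "c < rep_layer"
proof (cases "level c = 0")
  case True
  then show ?thesis using level_eq_0_imp[OF c] rep_layer_in_geodesic_prefix(1) by simp
next
  case False
  define l where "l = level c"
  have l: "l < rep_layer" "level l = l" "l < length P"
    using assms rep_layer_in_geodesic_prefix(3,4) unfolding l_def by auto
  have "c = l"
    using rep_layer_le(1)[of l c l] False l c unfolding l_def by fastforce
  with l show ?thesis by simp
qed

lemma layer_positions_rep_layer:
  obtains b where "layer_positions V E s P rep_layer ! 0 = rep_layer"
    "layer_positions V E s P rep_layer ! 1 = b" "rep_layer < b" "b < length P" "level b = rep_layer"
proof -
  note prefix = rep_layer_in_geodesic_prefix
  define rest where "rest = filter (\<lambda>i. level i = rep_layer) [Suc rep_layer..<length P]"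
  have "layer_positions V E s P rep_layer = filter (\<lambda>i. level i = rep_layer) [0..<length P]"
    unfolding layer_positions_def by (rule filter_cong) (auto simp: nth_in_layer_iff)
  moreover have "[0..<length P] = [0..<rep_layer] @ rep_layer # [Suc rep_layer..<length P]"
    using upt_add_eq_append[of 0 rep_layer "length P - rep_layer"] upt_conv_Cons prefix(3)
    by (simp del: upt_Suc)
  moreover have "filter (\<lambda>i. level i = rep_layer) [0..<rep_layer] = []"
    using prefix(4) by (auto simp: filter_empty_conv)
  ultimately have positions: "layer_positions V E s P rep_layer = rep_layer # rest"
    unfolding rest_def using prefix(4) by simp
  have "\<not> set P \<inter> layer V E s rep_layer \<subseteq> {P ! rep_layer}"
    using prefix(2) card_mono[of "{P ! rep_layer}" "set P \<inter> layer V E s rep_layer"] by auto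
  then obtain x where x: "x \<in> set P \<inter> layer V E s rep_layer" "x \<noteq> P ! rep_layer"
    by blast
  then obtain c where c: "c < length P" "x = P ! c" "level c = rep_layer"
    by (auto simp: in_set_conv_nth nth_in_layer_iff)
  have "rep_layer < c"
    using c x(2) prefix(4)[of c] by (cases "c \<le> rep_layer") auto
  with c have "rest \<noteq> []"
    unfolding rest_def by (auto simp: filter_empty_conv)
  then have "hd rest \<in> set rest" "rest ! 0 = hd rest"
    by (auto simp: hd_conv_nth)
  then show ?thesis
    using that[of "hd rest"] positions unfolding rest_def by auto
qed

end

theorem lemma2:
  fixes V :: "'a set" and E :: "('a \<times> 'a) set" and s t :: 'a and k :: nat and P :: "'a list"
  assumes "E \<subseteq> V \<times> V" and "s \<in> V" and "t \<in> V"
    and "\<forall>x\<in>V. \<exists>Q. is_dpath V E Q s x"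
    and "k \<ge> 1"
    and "\<forall>l\<in>{k..2*k-1}. \<not> (\<exists>Q. is_dpath V E Q s t \<and> plen Q = gdist V E s t + l)"
    and "\<exists>Q. is_dpath V E Q s t \<and> plen Q \<ge> gdist V E s t + k"
    and "is_dpath V E P s t" and "plen P \<ge> gdist V E s t + k"
    and "\<forall>Q. is_dpath V E Q s t \<and> plen Q \<ge> gdist V E s t + k \<longrightarrow> plen P \<le> plen Q"
  defines "p \<equiv> first_rep_layer V E s P"
    and "idx \<equiv> layer_positions V E s P (first_rep_layer V E s P)"
  shows "plen (subpath P (idx ! 0) (idx ! 1)) > k"
proof (rule ccontr)
  assume short: "\<not> ?thesis"
  interpret dpath_from V E s t P
    using assms(8) by unfold_locales
  have gap: "gdist V E s t + 2 * k \<le> plen P"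
  proof (rule ccontr)
    assume "\<not> gdist V E s t + 2 * k \<le> plen P"
    then have "plen P - gdist V E s t \<in> {k..2*k-1}" "plen P = gdist V E s t + (plen P - gdist V E s t)"
      using assms(9) by auto
    then show False
      using assms(6,8) by blast
  qed
  have endpoint: "plen P < length P" "level (plen P) = gdist V E s t"
    using assms(8) by (auto simp: is_dpath_def plen_def last_conv_nth)
  interpret dpath_from_with_shortcut V E s t P
    using endpoint gap assms(5) by unfold_locales auto
  obtain b where b: "idx ! 0 = p" "idx ! 1 = b" "p < b" "b < length P" "level b = p"
    using layer_positions_rep_layer unfolding idx_def p_def by metis
  have "level b \<le> level c" if "b < c" "c < length P" for c
    using less_rep_layer_if_level_less[OF that(2)] that(1) b(3,5) unfolding p_def by force
  then obtain Q where Q: "is_dpath V E Q s t" "plen Q = p + (plen P - b)"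
    using reroute_through_shortest_path[OF b(4)] b(5) by metis
  have "b - p \<le> k"
    using short plen_subpath[of p b P] b(1-4) by simp
  moreover have "b \<le> plen P"
    using b(4) by (simp add: plen_def)
  ultimately have "gdist V E s t + k \<le> plen Q"
    using Q(2) gap by linarith
  then have "plen P \<le> plen Q"
    using assms(10) Q(1) by blast
  with Q(2) b(3) \<open>b \<le> plen P\<close> show False
    by linarith
qed

end
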